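(* Let $E$ be a Borel space and consider the setting of the context. For each stopping time $\tau$, the induced policy $\pi_\tau=\{d^\tau_n,n\ge0\}$ belongs to $\Pi^0_{DH}$, i.e. each $d^\tau_n:\mathbb{R}\times\hat H_n\to A$ is measurable with $d^\tau_n(s,\hat h_n)\in A(x_n)$, and $d^\tau_n(0,\hat h_n)=0$ for all $\hat h_n\in H^0_n$.
   Context: $\Omega=\{(x_0,t_1,x_1,t_2,x_2,\dots): x_0\in E,(t_n,x_n)\in\mathbb{R}_+\times E\}$ with product Borel $\sigma$-algebra; $X_n(\omega)=x_n$, $T_0=0$, $T_{n+1}(\omega)=t_{n+1}$, $Y_n(\omega)=(x_0,t_1,x_1,\dots,t_n,x_n)$, $\mathcal{F}_n=\sigma(T_0,X_0,\dots,T_n,X_n)$. A stopping time is $\tau:\Omega\to\{0,1,2,\dots\}\cup\{+\infty\}$ with $\{\tau=n\}\in\mathcal{F}_n$ for all $n$. Decision model: $\hat E=E\cup\{\Delta\}$, $A=\{0,1\}$, $A(x)=\{0,1\}$ for $x\in E$, $A(\Delta)=\{1\}$; $\hat H_n$ is the set of histories $\hat h_n=(x_0,a_0,t_1,x_1,\dots,a_{n-1},t_n,x_n)$ with $x_m\in\hat E$, $a_m\in A(x_m)$, $t_m\in\mathbb{R}_+$; $H^0_n=E\times(\{0\}\times\mathbb{R}_+\times E)^n\subset\hat H_n$. A deterministic policy is a sequence $\{d_n\}$ of measurable $d_n:\mathbb{R}\times\hat H_n\to A$ with $d_n(s,\hat h_n)\in A(x_n)$; $\Pi^0_{DH}$ is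 the set of deterministic policies with $d_n(0,\hat h_n)=0$ for all $n$ and $\hat h_n\in H^0_n$. Induced policy: $B^\tau_n=\{Y_n(\omega):\omega\in\{\tau=n\}\}$; for $\hat h_n\in\hat H_n$ and $s\in\mathbb{R}$, $d^\tau_n(s,\hat h_n)=\mathbf{1}_{B^\tau_n}(x_0,t_1,x_1,\dots,t_n,x_n)\mathbf{1}_{(0,\infty)}(s)$ if $\hat h_n\in H^0_n$, and $d^\tau_n(s,\hat h_n)=1$ if $\hat h_n\in\hat H_n\setminus H^0_n$; $\pi_\tau=\{d^\tau_n\}$. *)

theory Defs
  imports "HOL-Analysis.Analysis" "HOL-Library.Extended_Nat"
begin

text \<open>The state space E is a Borel space: a Borel subset S of a Polish space,
  with the (trace of the) Borel sigma-algebra.\<close>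
definition EM :: "'e::polish_space set \<Rightarrow> 'e measure" where
  "EM S = restrict_space borel S"

text \<open>Sample space Omega = E x (R_+ x E)^N; omega = (x0, g) with g k = (t_(k+1), x_(k+1)).\<close>
definition OmegaM :: "'e::polish_space set \<Rightarrow> ('e \<times> (nat \<Rightarrow> real \<times> 'e)) measure" where
  "OmegaM S = EM S \<Otimes>\<^sub>M (\<Pi>\<^sub>M k\<in>(UNIV::nat set). (restrict_space borel {0..} \<Otimes>\<^sub>M EM S))"

text \<open>Y_n(omega) = (x0, t1, x1, ..., tn, xn), valued in E x (R_+ x E)^n.\<close>
definition YM :: "'e::polish_space set \<Rightarrow> nat \<Rightarrow> ('e \<times> (nat \<Rightarrow> real \<times> 'e)) measure" where
  "YM S n = EM S \<Otimes>\<^sub>M (\<Pi>\<^sub>M k\<in>{..<n}. (restrict_space borel {0..} \<Otimes>\<^sub>M EM S))"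

definition Y :: "nat \<Rightarrow> ('e \<times> (nat \<Rightarrow> real \<times> 'e)) \<Rightarrow> ('e \<times> (nat \<Rightarrow> real \<times> 'e))" where
  "Y n \<omega> = (fst \<omega>, restrict (snd \<omega>) {..<n})"

definition FF :: "'e::polish_space set \<Rightarrow> nat \<Rightarrow> ('e \<times> (nat \<Rightarrow> real \<times> 'e)) measure" where
  "FF S n = vimage_algebra (space (OmegaM S)) (Y n) (YM S n)"

definition stopping_time_seq :: "'e::polish_space set \<Rightarrow> (('e \<times> (nat \<Rightarrow> real \<times> 'e)) \<Rightarrow> enat) \<Rightarrow> bool" where
  "stopping_time_seq S \<tau> \<longleftrightarrow>
     (\<forall>n::nat. {\<omega> \<in> space (OmegaM S). \<tau> \<omega> = enat n} \<in> sets (FF S n))"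

text \<open>Extended state space E-hat = E \<union> {Delta}; Delta is None.\<close>
definition hatEM :: "'e::polish_space set \<Rightarrow> 'e option measure" where
  "hatEM S = sigma (insert None (Some ` S)) (insert {None} ((`) Some ` sets (EM S)))"

definition AM :: "nat measure" where
  "AM = count_space {0, 1}"

definition Aset :: "'e option \<Rightarrow> nat set" where
  "Aset x = (if x = None then {1} else {0, 1})"

text \<open>A history h_n = (x0, a0, t1, x1, ..., a_(n-1), t_n, x_n) is represented as
  (x0, f) with f m = (a_m, t_(m+1), x_(m+1)) for m < n.\<close>
type_synonym 'e hist = "'e option \<times> (nat \<Rightarrow> nat \<times> real \<times> 'e option)"

definition hstate :: "'e hist \<Rightarrow> nat \<Rightarrow> 'e option" where
  "hstate h m = (if m = 0 then fst h else snd (snd (snd h (m - 1))))"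

definition HhatM :: "'e::polish_space set \<Rightarrow> nat \<Rightarrow> 'e hist measure" where
  "HhatM S n = restrict_space
     (hatEM S \<Otimes>\<^sub>M (\<Pi>\<^sub>M m\<in>{..<n}. (AM \<Otimes>\<^sub>M (borel \<Otimes>\<^sub>M hatEM S))))
     {h. \<forall>m<n. fst (snd h m) \<in> Aset (hstate h m) \<and> 0 \<le> fst (snd (snd h m))}"

text \<open>H^0_n = E x ({0} x R_+ x E)^n inside Hhat_n.\<close>
definition H0 :: "'e::polish_space set \<Rightarrow> nat \<Rightarrow> 'e hist set" where
  "H0 S n = {h \<in> space (HhatM S n). fst h \<in> Some ` S \<and>
      (\<forall>m<n. fst (snd h m) = 0 \<and> snd (snd (snd h m)) \<in> Some ` S)}"

definition det_policy :: "'e::polish_space set \<Rightarrow> (nat \<Rightarrow> real \<times> 'e hist \<Rightarrow> nat) \<Rightarrow> bool" where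
  "det_policy S d \<longleftrightarrow> (\<forall>n. d n \<in> (borel \<Otimes>\<^sub>M HhatM S n) \<rightarrow>\<^sub>M AM \<and>
      (\<forall>s h. h \<in> space (HhatM S n) \<longrightarrow> d n (s, h) \<in> Aset (hstate h n)))"

definition Pi0_DH :: "'e::polish_space set \<Rightarrow> (nat \<Rightarrow> real \<times> 'e hist \<Rightarrow> nat) set" where
  "Pi0_DH S = {d. det_policy S d \<and> (\<forall>n. \<forall>h \<in> H0 S n. d n (0, h) = 0)}"

definition Bset :: "'e::polish_space set \<Rightarrow> (('e \<times> (nat \<Rightarrow> real \<times> 'e)) \<Rightarrow> enat) \<Rightarrow> nat
    \<Rightarrow> ('e \<times> (nat \<Rightarrow> real \<times> 'e)) set" where
  "Bset S \<tau> n = Y n ` {\<omega> \<in> space (OmegaM S). \<tau> \<omega> = enat n}"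

definition strip :: "nat \<Rightarrow> 'e hist \<Rightarrow> ('e \<times> (nat \<Rightarrow> real \<times> 'e))" where
  "strip n h = (the (fst h), \<lambda>m\<in>{..<n}. (fst (snd (snd h m)), the (snd (snd (snd h m)))))"

definition induced_policy :: "'e::polish_space set \<Rightarrow> (('e \<times> (nat \<Rightarrow> real \<times> 'e)) \<Rightarrow> enat)
    \<Rightarrow> nat \<Rightarrow> real \<times> 'e hist \<Rightarrow> nat" where
  "induced_policy S \<tau> n = (\<lambda>(s, h).
     if h \<in> H0 S n then indicator (Bset S \<tau> n) (strip n h) * indicator {0<..} s else 1)"

end

theory Submission imports Defs begin

(* On H^0_n the induced policy is the product of the indicator of {s > 0} and the indicator of
   B_n pulled back along strip, the map forgetting the zero actions and the Some-wrappers; off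
   H^0_n it is constantly 1. The stopping-time property gives {\<tau> = n} = Y_n^{-1}(C) for a
   measurable C, and since Y_n maps Omega onto the whole space of n-step histories (pad with a
   constant tail), B_n = C. As H^0_n is measurable and strip is measurable on it, d_n is
   measurable. *)

lemma space_EM [simp]: "space (EM S) = S"
  by (simp add: EM_def space_restrict_space)

lemma hatEM_generator_subset:
  "insert {None} ((`) Some ` sets (EM S)) \<subseteq> Pow (insert None (Some ` S))"
  using sets.sets_into_space[of _ "EM S"] by auto

lemma space_hatEM [simp]: "space (hatEM S) = insert None (Some ` S)"
  unfolding hatEM_def using hatEM_generator_subset by (simp add: space_measure_of_conv)

lemma sets_hatEM:
  "sets (hatEM S) = sigma_sets (insert None (Some ` S)) (insert {None} ((`) Some ` sets (EM S)))"
  unfolding hatEM_def by (rule sets_measure_of[OF hatEM_generator_subset])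

lemma Some_image_in_sets_hatEM: "A \<in> sets (EM S) \<Longrightarrow> Some ` A \<in> sets (hatEM S)"
  unfolding sets_hatEM by (rule sigma_sets.Basic) auto

lemma Some_image_space_in_sets_hatEM [measurable]: "Some ` S \<in> sets (hatEM S)"
  using Some_image_in_sets_hatEM[OF sets.top[of "EM S"]] by simp

lemma measurable_the_hatEM: "the \<in> restrict_space (hatEM S) (Some ` S) \<rightarrow>\<^sub>M EM S"
proof (rule measurableI)
  fix x assume "x \<in> space (restrict_space (hatEM S) (Some ` S))"
  then show "the x \<in> space (EM S)" by (auto simp: space_restrict_space)
next
  fix A assume A: "A \<in> sets (EM S)"
  then have "A \<subseteq> S" using sets.sets_into_space by fastforce
  then have "the -` A \<inter> space (restrict_space (hatEM S) (Some ` S)) = Some ` A"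
    by (auto simp: space_restrict_space)
  moreover have "Some ` A \<in> sets (restrict_space (hatEM S) (Some ` S))"
    using \<open>A \<subseteq> S\<close> Some_image_in_sets_hatEM[OF A]
    by (subst sets_restrict_space_iff) auto
  ultimately show "the -` A \<inter> space (restrict_space (hatEM S) (Some ` S))
      \<in> sets (restrict_space (hatEM S) (Some ` S))" by simp
qed

lemma sets_H0 [measurable]: "H0 S n \<in> sets (HhatM S n)"
proof -
  have "Measurable.pred (HhatM S n) (\<lambda>h. fst h \<in> Some ` S \<and>
      (\<forall>m<n. fst (snd h m) = 0 \<and> snd (snd (snd h m)) \<in> Some ` S))"
    unfolding HhatM_def AM_def by (rule measurable_restrict_space1) measurable
  then show ?thesis unfolding H0_def pred_def by simp
qed

lemma measurable_strip: "strip n \<in> restrict_space (HhatM S n) (H0 S n) \<rightarrow>\<^sub>M YM S n"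
proof -
  let ?M = "restrict_space (HhatM S n) (H0 S n)"
  have space_M: "space ?M = H0 S n" by simp
  have id: "(\<lambda>h. h) \<in> ?M \<rightarrow>\<^sub>M hatEM S \<Otimes>\<^sub>M (\<Pi>\<^sub>M m\<in>{..<n}. AM \<Otimes>\<^sub>M (borel \<Otimes>\<^sub>M hatEM S))"
    unfolding HhatM_def by (intro measurable_restrict_space1) simp
  have x0: "(\<lambda>h. the (fst h)) \<in> ?M \<rightarrow>\<^sub>M EM S"
  proof (rule measurable_compose[OF _ measurable_the_hatEM], rule measurable_restrict_space2)
    show "fst \<in> space ?M \<rightarrow> Some ` S" unfolding space_M by (auto simp: H0_def)
    show "fst \<in> ?M \<rightarrow>\<^sub>M hatEM S" using measurable_compose[OF id measurable_fst] by simp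
  qed
  have x: "(\<lambda>h. the (snd (snd (snd h m)))) \<in> ?M \<rightarrow>\<^sub>M EM S" if "m < n" for m
  proof (rule measurable_compose[OF _ measurable_the_hatEM], rule measurable_restrict_space2)
    show "(\<lambda>h. snd (snd (snd h m))) \<in> space ?M \<rightarrow> Some ` S"
      using that unfolding space_M by (auto simp: H0_def)
    show "(\<lambda>h. snd (snd (snd h m))) \<in> ?M \<rightarrow>\<^sub>M hatEM S"
      by (rule measurable_compose[OF id]) (measurable, simp add: that)
  qed
  have t: "(\<lambda>h. fst (snd (snd h m))) \<in> ?M \<rightarrow>\<^sub>M restrict_space borel {0..}" if "m < n" for m
  proof (rule measurable_restrict_space2)
    show "(\<lambda>h. fst (snd (snd h m))) \<in> space ?M \<rightarrow> {0..}"
      using that unfolding space_M by (auto simp: H0_def HhatM_def space_restrict_space)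
    show "(\<lambda>h. fst (snd (snd h m))) \<in> ?M \<rightarrow>\<^sub>M borel"
      by (rule measurable_compose[OF id]) (measurable, simp add: that)
  qed
  show ?thesis
    unfolding strip_def YM_def
    by (intro measurable_Pair measurable_restrict x0) (simp_all add: t x)
qed

lemma space_OmegaM: "space (OmegaM S) = S \<times> (UNIV \<rightarrow>\<^sub>E ({0..} \<times> S))"
  by (simp add: OmegaM_def space_pair_measure space_PiM space_restrict_space)

lemma space_YM: "space (YM S n) = S \<times> ({..<n} \<rightarrow>\<^sub>E ({0..} \<times> S))"
  by (simp add: YM_def space_pair_measure space_PiM space_restrict_space)

lemma Y_image_space_OmegaM: "Y n ` space (OmegaM S) = space (YM S n)"
proof
  show "Y n ` space (OmegaM S) \<subseteq> space (YM S n)"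
    by (auto simp: space_OmegaM space_YM Y_def PiE_iff split: if_split_asm)
  show "space (YM S n) \<subseteq> Y n ` space (OmegaM S)"
  proof
    fix y assume y: "y \<in> space (YM S n)"
    define \<omega> where "\<omega> = (fst y, \<lambda>k. if k < n then snd y k else (0::real, fst y))"
    have "\<omega> \<in> space (OmegaM S)"
      using y by (auto simp: space_OmegaM space_YM \<omega>_def PiE_def Pi_def)
    moreover have "Y n \<omega> = y"
      using y by (cases y) (auto simp: space_YM \<omega>_def Y_def PiE_def extensional_def)
    ultimately show "y \<in> Y n ` space (OmegaM S)" by force
  qed
qed

lemma image_Y_in_sets_YM: "A \<in> sets (FF S n) \<Longrightarrow> Y n ` A \<in> sets (YM S n)"
proof -
  assume "A \<in> sets (FF S n)"
  then obtain C where C: "C \<in> sets (YM S n)" and A: "A = Y n -` C \<inter> space (OmegaM S)"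
    using Y_image_space_OmegaM[of n S]
    unfolding FF_def by (subst (asm) sets_vimage_algebra2) blast+
  have "Y n ` A = C \<inter> Y n ` space (OmegaM S)" unfolding A by blast
  also have "\<dots> = C" using sets.sets_into_space[OF C] by (simp add: Y_image_space_OmegaM Int_absorb2)
  finally show ?thesis using C by simp
qed

lemma sets_Bset: "stopping_time_seq S \<tau> \<Longrightarrow> Bset S \<tau> n \<in> sets (YM S n)"
  unfolding stopping_time_seq_def Bset_def by (blast intro: image_Y_in_sets_YM)

lemma sets_H0_strip_vimage:
  assumes "B \<in> sets (YM S n)"
  shows "{h \<in> H0 S n. strip n h \<in> B} \<in> sets (HhatM S n)"
proof -
  have "strip n -` B \<inter> H0 S n \<in> sets (restrict_space (HhatM S n) (H0 S n))"
    using measurable_sets[OF measurable_strip assms] by simp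
  then have "strip n -` B \<inter> H0 S n \<in> sets (HhatM S n)"
    by (subst (asm) sets_restrict_space_iff) (auto simp: sets.Int_space_eq2)
  moreover have "{h \<in> H0 S n. strip n h \<in> B} = strip n -` B \<inter> H0 S n" by blast
  ultimately show ?thesis by simp
qed

lemma measurable_induced_policy:
  assumes "stopping_time_seq S \<tau>"
  shows "induced_policy S \<tau> n \<in> borel \<Otimes>\<^sub>M HhatM S n \<rightarrow>\<^sub>M AM"
proof -
  define D where "D = {h \<in> H0 S n. strip n h \<in> Bset S \<tau> n}"
  have [measurable]: "D \<in> sets (HhatM S n)"
    unfolding D_def using sets_H0_strip_vimage[OF sets_Bset[OF assms]] .
  have "induced_policy S \<tau> n =
      (\<lambda>x. if snd x \<in> H0 S n then if snd x \<in> D \<and> 0 < fst x then 1 else 0 else 1)"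
    by (auto simp: induced_policy_def D_def indicator_def)
  then show ?thesis unfolding AM_def by simp measurable
qed

lemma hstate_H0: "h \<in> H0 S n \<Longrightarrow> hstate h n \<in> Some ` S"
  by (cases n) (auto simp: H0_def hstate_def)

lemma induced_policy_in_Aset: "induced_policy S \<tau> n (s, h) \<in> Aset (hstate h n)"
  using hstate_H0[of h S n] by (auto simp: induced_policy_def Aset_def indicator_def)

lemma induced_policy_zero: "h \<in> H0 S n \<Longrightarrow> induced_policy S \<tau> n (0, h) = 0"
  by (simp add: induced_policy_def)

theorem lemma4p3:
  fixes S :: "'e::polish_space set"
    and \<tau> :: "('e \<times> (nat \<Rightarrow> real \<times> 'e)) \<Rightarrow> enat"
  assumes "S \<in> sets borel"
    and "stopping_time_seq S \<tau>"
  shows "induced_policy S \<tau> \<in> Pi0_DH S"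
  unfolding Pi0_DH_def det_policy_def
  using measurable_induced_policy[OF assms(2)] induced_policy_in_Aset induced_policy_zero
  by blast

end
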